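(* Let $M$ be a Hausdorff space satisfying the first axiom of countability and the Lindelöf condition (every open cover has a countable subcover), and let $\mathcal{B}(M)$ be the $\sigma$-algebra of Borel subsets of $M$. A subset $\mathfrak{p}\subseteq\mathcal{B}(M)$ is a point in $\mathcal{B}(M)$ if and only if there is $x\in M$ with $\mathfrak{p}=\{A\in\mathcal{B}(M): x\in A\}$ (i.e. $\mathfrak{p}$ is an atomic quasipoint of $\mathcal{B}(M)$).
   Context: A point in the $\sigma$-complete lattice $\mathcal{B}(M)$ (lattice operations: union and intersection) is a nonempty subset $\mathfrak{p}$ such that: (1) $\emptyset\notin\mathfrak{p}$; (2) $A,B\in\mathfrak{p}\Rightarrow A\cap B\in\mathfrak{p}$; (3) $A\in\mathfrak{p}$, $A\subseteq B\in\mathcal{B}(M)\Rightarrow B\in\mathfrak{p}$; (4) for every countable family $(A_n)$ in $\mathcal{B}(M)$ with $\bigcup_n A_n\in\mathfrak{p}$ there is $n$ with $A_n\in\mathfrak{p}$. *)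

theory Defs
  imports "HOL-Analysis.Analysis" "HOL-Probability.Probability"
begin

text \<open>Countable families
are indexed by nat (finite nonempty families can be padded by repetition).\<close>
definition sigma_point :: "'a set set \<Rightarrow> 'a set set \<Rightarrow> bool" where
  "sigma_point L p \<longleftrightarrow>
     p \<subseteq> L \<and> p \<noteq> {} \<and> {} \<notin> p \<and>
     (\<forall>A\<in>p. \<forall>B\<in>p. A \<inter> B \<in> p) \<and>
     (\<forall>A\<in>p. \<forall>B\<in>L. A \<subseteq> B \<longrightarrow> B \<in> p) \<and>
     (\<forall>F :: nat \<Rightarrow> 'a set. range F \<subseteq> L \<and> \<Union>(range F) \<in> p \<longrightarrow> (\<exists>n. F n \<in> p))"

end

theory Submission
  imports Defs
begin

text \<open>Suppose no x has all its open neighbourhoods in the point p.  Then the open sets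
outside p cover M, by the Lindelof property countably many of them do, and countable
primeness puts one of them in p, a contradiction.  So p contains every neighbourhood of
some x.  If (B i) is a countable neighbourhood base at x, the T1 property makes the
closed sets {x} and - B i a countable cover of M; as B i \<in> p excludes - B i \<in> p,
countable primeness gives {x} \<in> p, and a point containing {x} is the principal one.\<close>

lemma sigma_pointD:
  assumes "sigma_point L p"
  shows "p \<subseteq> L" "p \<noteq> {}" "{} \<notin> p"
    and "A \<in> p \<Longrightarrow> B \<in> p \<Longrightarrow> A \<inter> B \<in> p"
    and "A \<in> p \<Longrightarrow> B \<in> L \<Longrightarrow> A \<subseteq> B \<Longrightarrow> B \<in> p"
    and "range (F :: nat \<Rightarrow> _) \<subseteq> L \<Longrightarrow> \<Union>(range F) \<in> p \<Longrightarrow> \<exists>n. F n \<in> p"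
  using assms unfolding sigma_point_def by simp_all

lemma sigma_point_principal:
  assumes "sigma_algebra \<Omega> L" and "x \<in> \<Omega>"
  shows "sigma_point L {A \<in> L. x \<in> A}"
proof -
  interpret sigma_algebra \<Omega> L by fact
  show ?thesis
    unfolding sigma_point_def using assms(2) by auto
qed

lemma sigma_point_countable_Union:
  assumes p: "sigma_point L p"
    and \<U>: "countable \<U>" "\<U> \<subseteq> L" "\<Union>\<U> \<in> p"
  shows "\<exists>U\<in>\<U>. U \<in> p"
proof -
  have "\<U> \<noteq> {}"
    using sigma_pointD(3)[OF p] \<U>(3) by auto
  then have range_eq: "range (from_nat_into \<U>) = \<U>"
    using \<U>(1) by (rule range_from_nat_into)
  then obtain n where "from_nat_into \<U> n \<in> p"
    using sigma_pointD(6)[OF p, of "from_nat_into \<U>"] \<U>(2,3) by auto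
  then show ?thesis
    using range_eq by blast
qed

lemma sigma_point_principal_if_singleton:
  assumes p: "sigma_point L p" and x: "{x} \<in> p"
  shows "p = {A \<in> L. x \<in> A}"
proof (intro set_eqI iffI)
  fix A assume "A \<in> p"
  then have "A \<inter> {x} \<in> p"
    using sigma_pointD(4)[OF p _ x] by blast
  then have "x \<in> A"
    using sigma_pointD(3)[OF p] by (cases "x \<in> A") auto
  then show "A \<in> {A \<in> L. x \<in> A}"
    using sigma_pointD(1)[OF p] \<open>A \<in> p\<close> by blast
next
  fix A assume "A \<in> {A \<in> L. x \<in> A}"
  then show "A \<in> p"
    using sigma_pointD(5)[OF p x, of A] by simp
qed

lemma sigma_point_contains_nhds_if_Lindelof:
  fixes p :: "'a :: topological_space set set"
  assumes Lindelof: "Lindelof_space (euclidean :: 'a topology)"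
    and p: "sigma_point L p"
    and open_in_L: "\<And>U. open U \<Longrightarrow> U \<in> L"
  shows "\<exists>x. \<forall>U. open U \<longrightarrow> x \<in> U \<longrightarrow> U \<in> p"
proof (rule ccontr)
  assume "\<nexists>x. \<forall>U. open U \<longrightarrow> x \<in> U \<longrightarrow> U \<in> p"
  then obtain N where N: "\<And>x. open (N x)" "\<And>x. x \<in> N x" "\<And>x. N x \<notin> p"
    by metis
  have "\<Union>(range N) = UNIV"
    using N(2) by blast
  then obtain \<V> where \<V>: "countable \<V>" "\<V> \<subseteq> range N" "\<Union>\<V> = UNIV"
    using Lindelof_spaceD[OF Lindelof, of "range N"] N(1) by force
  obtain A where "A \<in> p"
    using sigma_pointD(2)[OF p] by blast
  then have "UNIV \<in> p"
    using sigma_pointD(5)[OF p _ open_in_L[OF open_UNIV]] by blast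
  moreover have "\<V> \<subseteq> L"
    using \<V>(2) N(1) open_in_L by blast
  ultimately obtain U where "U \<in> \<V>" "U \<in> p"
    using sigma_point_countable_Union[OF p \<V>(1)] \<V>(3) by auto
  then show False
    using \<V>(2) N(3) by blast
qed

lemma sigma_point_singleton_if_contains_nhds:
  fixes p :: "'a :: {t1_space, first_countable_topology} set set"
  assumes p: "sigma_point L p"
    and closed_in_L: "\<And>C. closed C \<Longrightarrow> C \<in> L"
    and nhds: "\<And>U. open U \<Longrightarrow> x \<in> U \<Longrightarrow> U \<in> p"
  shows "{x} \<in> p"
proof -
  obtain \<A> where \<A>: "countable \<A>" "\<And>A. A \<in> \<A> \<Longrightarrow> x \<in> A" "\<And>A. A \<in> \<A> \<Longrightarrow> open A"
    "\<And>S. open S \<Longrightarrow> x \<in> S \<Longrightarrow> \<exists>A\<in>\<A>. A \<subseteq> S"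
    using first_countable_basisE[of x] by blast
  define \<U> where "\<U> = insert {x} (uminus ` \<A>)"
  have "countable \<U>"
    using \<A>(1) unfolding \<U>_def by simp
  moreover have "\<U> \<subseteq> L"
    using closed_in_L[OF closed_singleton] closed_in_L[OF closed_Compl[OF \<A>(3)]]
    unfolding \<U>_def by blast
  moreover have "\<Union>\<U> = UNIV"
  proof -
    have "y \<in> \<Union>\<U>" if "y \<noteq> x" for y
    proof -
      obtain S where "open S" "x \<in> S" "y \<notin> S"
        using t1_space[OF \<open>y \<noteq> x\<close>[symmetric]] by blast
      then obtain A where "A \<in> \<A>" "y \<notin> A"
        using \<A>(4) by blast
      then show ?thesis
        unfolding \<U>_def by blast
    qed
    then show ?thesis
      unfolding \<U>_def by blast
  qed
  moreover have "UNIV \<in> p"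
    using nhds[OF open_UNIV] by simp
  ultimately obtain U where "U \<in> \<U>" "U \<in> p"
    using sigma_point_countable_Union[OF p] by metis
  moreover have "- A \<notin> p" if "A \<in> \<A>" for A
  proof
    assume "- A \<in> p"
    then have "- A \<inter> A \<in> p"
      using sigma_pointD(4)[OF p _ nhds[OF \<A>(3,2)[OF that]]] by blast
    then show False
      using sigma_pointD(3)[OF p] by simp
  qed
  ultimately show ?thesis
    unfolding \<U>_def by blast
qed

theorem proposition3p26:
  fixes p :: "'a :: {t2_space, first_countable_topology} set set"
  assumes "Lindelof_space (euclidean :: 'a topology)"
  shows "sigma_point (sets (borel :: 'a measure)) p \<longleftrightarrow>
         (\<exists>x. p = {A \<in> sets (borel :: 'a measure). x \<in> A})"
proof
  assume p: "sigma_point (sets (borel :: 'a measure)) p"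
  obtain x where "\<And>U. open U \<Longrightarrow> x \<in> U \<Longrightarrow> U \<in> p"
    using sigma_point_contains_nhds_if_Lindelof[OF assms p borel_open] by blast
  then have "{x} \<in> p"
    using sigma_point_singleton_if_contains_nhds[OF p borel_closed] by blast
  then show "\<exists>x. p = {A \<in> sets borel. x \<in> A}"
    using sigma_point_principal_if_singleton[OF p] by blast
next
  assume "\<exists>x. p = {A \<in> sets (borel :: 'a measure). x \<in> A}"
  then show "sigma_point (sets borel) p"
    using sigma_point_principal[OF sets.sigma_algebra_axioms, of _ borel] by auto
qed

end
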